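(* For every stream type $s$, setting $N = B(s)$, for every list of events $xs$ with $xs \Vdash s$ and every event $x$ occurring in $xs$, we have $|x| \le N$.
   Context: Stream types are generated by $s,t ::= 1 \mid \varepsilon \mid s\cdot t \mid s\,\|\,t \mid s+t \mid s^\star$. Nullability: $\varepsilon$ is nullable; $s\|t$ is nullable if $s$ and $t$ are; nothing else is nullable. Events are generated by $x ::= \mathtt{oneev} \mid \mathtt{parA}(x) \mid \mathtt{parB}(x) \mid \mathtt{puncA} \mid \mathtt{puncB} \mid \mathtt{catpunc} \mid \mathtt{catA}(x)$. The event derivative relation $\delta_x s \sim s'$ (which also serves as event typing: $x$ is an event for $s$ iff $\delta_x s\sim s'$ for some $s'$) is defined inductively by: $\delta_{\mathtt{oneev}}1\sim\varepsilon$; $\delta_{\mathtt{parA}(x)}(s\|t)\sim s'\|t$ if $\delta_x s\sim s'$; $\delta_{\mathtt{parB}(x)}(s\|t)\sim s\|t'$ if $\delta_x t\sim t'$; $\delta_{\mathtt{puncA}}(s+t)\sim s$; $\delta_{\mathtt{puncB}}(s+t)\sim t$; $\delta_{\mathtt{catpunc}}(s\cdot t)\sim t$ if $s$ is nullable; $\delta_{\mathtt{catA}(x)}(s\cdot t)\sim s'\cdot t$ if $\delta_x s\sim s'$; $\delta_{\mathtt{puncA}}s^\star\sim\varepsilon$; $\delta_{\mathtt{puncB}}s^\star\sim s\cdot s^\star$. A list of events is for a type, $xs\Vdash s$: the empty list $[]\Vdash s$ for every $s$; and $(x::xs)\Vdash s$ if $x$ is an event for $s$, $\delta_x s\sim s'$,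 and $xs\Vdash s'$. Event size: $|\mathtt{oneev}|=|\mathtt{puncA}|=|\mathtt{puncB}|=|\mathtt{catpunc}|=1$, $|\mathtt{parA}(x)|=|\mathtt{parB}(x)|=|\mathtt{catA}(x)|=1+|x|$. Size bound: $B(\varepsilon)=0$, $B(1)=1$, $B(s\|t)=1+\max(B(s),B(t))$, $B(s\cdot t)=\max(1+B(s),B(t))$, $B(s+t)=\max(1,B(s),B(t))$, $B(s^\star)=\max(1,1+B(s))$. *)

theory Defs
  imports Main
begin

datatype stype = One | Eps | Cat stype stype | Par stype stype | Plus stype stype | Star stype

fun nullable :: "stype \<Rightarrow> bool" where
  "nullable Eps = True"
| "nullable (Par s t) = (nullable s \<and> nullable t)"
| "nullable One = False"
| "nullable (Cat s t) = False"
| "nullable (Plus s t) = False"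
| "nullable (Star s) = False"

datatype event = OneEv | ParA event | ParB event | PuncA | PuncB | CatPunc | CatA event

inductive deriv :: "event \<Rightarrow> stype \<Rightarrow> stype \<Rightarrow> bool" where
  "deriv OneEv One Eps"
| "deriv x s s' \<Longrightarrow> deriv (ParA x) (Par s t) (Par s' t)"
| "deriv x t t' \<Longrightarrow> deriv (ParB x) (Par s t) (Par s t')"
| "deriv PuncA (Plus s t) s"
| "deriv PuncB (Plus s t) t"
| "nullable s \<Longrightarrow> deriv CatPunc (Cat s t) t"
| "deriv x s s' \<Longrightarrow> deriv (CatA x) (Cat s t) (Cat s' t)"
| "deriv PuncA (Star s) Eps"
| "deriv PuncB (Star s) (Cat s (Star s))"

inductive events_for :: "event list \<Rightarrow> stype \<Rightarrow> bool" where
  "events_for [] s"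
| "deriv x s s' \<Longrightarrow> events_for xs s' \<Longrightarrow> events_for (x # xs) s"

fun esize :: "event \<Rightarrow> nat" where
  "esize OneEv = 1" | "esize PuncA = 1" | "esize PuncB = 1" | "esize CatPunc = 1"
| "esize (ParA x) = 1 + esize x" | "esize (ParB x) = 1 + esize x" | "esize (CatA x) = 1 + esize x"

fun bound :: "stype \<Rightarrow> nat" where
  "bound Eps = 0" | "bound One = 1"
| "bound (Par s t) = 1 + max (bound s) (bound t)"
| "bound (Cat s t) = max (1 + bound s) (bound t)"
| "bound (Plus s t) = max 1 (max (bound s) (bound t))"
| "bound (Star s) = max 1 (1 + bound s)"

end

theory Submission
  imports Defs
begin

text \<open>Taking a derivative never increases the bound, and the bound of a type dominates the
size of every event for it; induction along the list then bounds every event by the bound of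
the initial type.\<close>

lemma deriv_esize_le_bound: "deriv x s s' \<Longrightarrow> esize x \<le> bound s"
  by (induction rule: deriv.induct) auto

lemma deriv_bound_le: "deriv x s s' \<Longrightarrow> bound s' \<le> bound s"
  by (induction rule: deriv.induct) auto

theorem mainTheorem10:
  fixes s :: stype and xs :: "event list" and x :: event
  assumes "events_for xs s" and "x \<in> set xs"
  shows "esize x \<le> bound s"
  using assms
proof (induction rule: events_for.induct)
  case (1 s)
  then show ?case by simp
next
  case (2 y s s' ys)
  show ?case
  proof (cases "x = y")
    case True
    then show ?thesis using deriv_esize_le_bound[OF 2(1)] by simp
  next
    case False
    then have "esize x \<le> bound s'" using 2 by simp
    also have "\<dots> \<le> bound s" using deriv_bound_le[OF 2(1)] .
    finally show ?thesis .
  qed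
qed

end
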